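(* Let $n\ge 3$ and let $M\in\mathbb{R}^{n\times n}$ be a nonnegative irreducible matrix. Then (i) $\lim_{\ell\to\infty}\mathcal{E}^\ell(M)=\mathcal{E}(M)$ (entrywise); and (ii) the sequence $(\mathcal{E}^\ell(M))_{\ell\ge 1}$ is entrywise nondecreasing: $\mathcal{E}^\ell(M)\le\mathcal{E}^{\ell+1}(M)$ entrywise for every $\ell\ge 1$.
   Context: Let $N=\{1,\dots,n\}$ and let $G$ be the directed graph on $N$ with an edge $i\to j$ iff $m_{ij}>0$ (strongly connected since $M$ is irreducible); $\delta_{ij}$ is the directed graph distance from $i$ to $j$ in $G$ ($\delta_{ii}=0$). For $M_{RC}$ the submatrix with rows in $R$ and columns in $C$, $\bar S=N\setminus S$, and $\rho(M)$ the spectral radius, the isoradial reduction is $\mathcal{I}_S(M)=M_{SS}-M_{S\bar S}(M_{\bar S\bar S}-\rho(M)I)^{-1}M_{\bar S S}$ (rows/columns indexed by $S$), and the effective transition matrix is $\mathcal{E}(M)=[\varepsilon_{ij}]$ with $\varepsilon_{ij}=\mathcal{I}_{\{i,j\}}(M)_{ij}$ for $i\ne j$ and $\varepsilon_{ii}=\sum_{k\ne i}\mathcal{I}_{\{i,k\}}(M)_{ii}$. For $i\neq j$ and integer $\ell\ge1$ let $\Gamma^\ell_{ij}=\{k\in N:\delta_{ik}+\delta_{kj}\le\ell\text{ and }\delta_{jk}+\delta_{ki}\le\ell\}\cup\{i,j\}$, let $S=\{i,j\}$ and $\tilde S=\Gamma^\ell_{ij}\setminus S$. The $\ell$-step approximation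 is $$\mathcal{I}^\ell_S(M)=M_{SS}+\rho(M)^{-1}M_{S\tilde S}\Big(\sum_{k=0}^{\ell}\big(\rho(M)^{-1}M_{\tilde S\tilde S}\big)^k\Big)M_{\tilde S S}$$ (the second term being zero if $\tilde S=\emptyset$), with rows/columns indexed by $S$, and $\mathcal{E}^\ell(M)=[\varepsilon^\ell_{ij}]$ where $\varepsilon^\ell_{ij}=\mathcal{I}^\ell_{\{i,j\}}(M)_{ij}$ for $i\ne j$ and $\varepsilon^\ell_{ii}=\sum_{k\ne i}\mathcal{I}^\ell_{\{i,k\}}(M)_{ii}$. *)

theory Defs
  imports "Jordan_Normal_Form.Spectral_Radius" "Jordan_Normal_Form.DL_Submatrix"
begin

(* Indices are 0-based: N = {0..<n}. Matrices are JNF matrices  real mat  of dimension n x n. *)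

definition nonneg_mat :: "real mat \<Rightarrow> bool" where
  "nonneg_mat M \<longleftrightarrow> (\<forall>i<dim_row M. \<forall>j<dim_col M. M $$ (i,j) \<ge> 0)"

(* classical irreducibility (no permutation to block upper-triangular form), written index-wise:
   there is no nonempty proper index set I with M(i,j) = 0 for all i in I, j not in I *)
definition irreducible_mat :: "real mat \<Rightarrow> bool" where
  "irreducible_mat M \<longleftrightarrow> square_mat M \<and>
     \<not> (\<exists>I. I \<noteq> {} \<and> I \<subset> {0..<dim_row M} \<and>
           (\<forall>i\<in>I. \<forall>j\<in>{0..<dim_row M} - I. M $$ (i,j) = 0))"

definition rho :: "real mat \<Rightarrow> real" where
  "rho M = spectral_radius (map_mat complex_of_real M)"

definition mat_inv :: "real mat \<Rightarrow> real mat" where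
  "mat_inv A = (THE B. inverts_mat A B \<and> inverts_mat B A)"

definition edges :: "real mat \<Rightarrow> (nat \<times> nat) set" where
  "edges M = {(i,j). i < dim_row M \<and> j < dim_row M \<and> M $$ (i,j) > 0}"

definition dist_G :: "real mat \<Rightarrow> nat \<Rightarrow> nat \<Rightarrow> nat" where
  "dist_G M i j = (LEAST k. (i,j) \<in> (edges M) ^^ k)"

(* position of index i inside the ordered index set S (rows/columns of M_{RC} are indexed by
   R and C in increasing order, as in JNF's submatrix) *)
definition pos :: "nat set \<Rightarrow> nat \<Rightarrow> nat" where
  "pos S i = card {a\<in>S. a < i}"

definition entry :: "real mat \<Rightarrow> nat set \<Rightarrow> nat \<Rightarrow> nat \<Rightarrow> real" where
  "entry A S i j = A $$ (pos S i, pos S j)"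

definition isoradial :: "nat set \<Rightarrow> real mat \<Rightarrow> real mat" where
  "isoradial S M = (let n = dim_row M; Sb = {0..<n} - S in
     submatrix M S S - submatrix M S Sb *
       mat_inv (submatrix M Sb Sb - rho M \<cdot>\<^sub>m 1\<^sub>m (card Sb)) * submatrix M Sb S)"

definition eff :: "real mat \<Rightarrow> real mat" where
  "eff M = mat (dim_row M) (dim_row M) (\<lambda>(i,j).
     if i \<noteq> j then entry (isoradial {i,j} M) {i,j} i j
     else (\<Sum>k\<in>{0..<dim_row M} - {i}. entry (isoradial {i,k} M) {i,k} i i))"

fun geom_mat :: "real mat \<Rightarrow> nat \<Rightarrow> real mat" where
  "geom_mat A 0 = 1\<^sub>m (dim_row A)"
| "geom_mat A (Suc k) = geom_mat A k + A ^\<^sub>m (Suc k)"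

definition Gamma :: "real mat \<Rightarrow> nat \<Rightarrow> nat \<Rightarrow> nat \<Rightarrow> nat set" where
  "Gamma M l i j = {k. k < dim_row M \<and> dist_G M i k + dist_G M k j \<le> l
                        \<and> dist_G M j k + dist_G M k i \<le> l} \<union> {i,j}"

definition isoradial_l :: "nat \<Rightarrow> nat \<Rightarrow> nat \<Rightarrow> real mat \<Rightarrow> real mat" where
  "isoradial_l l i j M = (let S = {i,j}; St = Gamma M l i j - S in
     submatrix M S S + (1 / rho M) \<cdot>\<^sub>m (submatrix M S St *
       geom_mat ((1 / rho M) \<cdot>\<^sub>m submatrix M St St) l * submatrix M St S))"

definition eff_l :: "nat \<Rightarrow> real mat \<Rightarrow> real mat" where
  "eff_l l M = mat (dim_row M) (dim_row M) (\<lambda>(i,j).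
     if i \<noteq> j then entry (isoradial_l l i j M) {i,j} i j
     else (\<Sum>k\<in>{0..<dim_row M} - {i}. entry (isoradial_l l i k M) {i,k} i i))"

end

(*
  Let S = {i,j} and T = N - S. Since M is irreducible and nonnegative, the proper principal
  submatrix M_TT has spectral radius strictly below rho(M): otherwise the absolute values of an
  eigenvector of M_TT for an eigenvalue of maximal modulus, extended by zero, would be a nonzero
  nonnegative vector x with M x >= rho(M) x, and such a vector is a positive eigenvector of M
  (a Perron-Frobenius argument based on the Collatz-Wielandt bound and on the positivity of
  (I + M)^n x). Hence -(M_TT - rho(M) I)^-1 is the Neumann series rho(M)^-1 sum_k (M_TT/rho(M))^k,
  and as Gamma^l_ij = N for all large l, the l-step approximation is eventually a partial sum of
  this series, which gives (i).

  For (ii), the correction term of I^l_S(M) is the (S,S) block of a product of nonnegative n x n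
  matrices in which the rows and columns outside Gamma^l_ij - S are replaced by zeros. Passing
  from l to l + 1 enlarges this index set and adds a term to the geometric sum, so no entry
  decreases.
*)

theory Submission
  imports Defs
begin

lemma index_mult_mat_sum:
  assumes "(A::'a::comm_semiring_0 mat) \<in> carrier_mat n k" "B \<in> carrier_mat k m" "i < n" "j < m"
  shows "(A * B) $$ (i,j) = (\<Sum>t<k. A $$ (i,t) * B $$ (t,j))"
  using assms by (auto simp: scalar_prod_def atLeast0LessThan intro!: sum.cong)

lemma index_mult_mat_vec_sum:
  assumes "(A::'a::comm_semiring_0 mat) \<in> carrier_mat n k" "v \<in> carrier_vec k" "i < n"
  shows "(A *\<^sub>v v) $ i = (\<Sum>t<k. A $$ (i,t) * v $ t)"
  using assms by (auto simp: scalar_prod_def atLeast0LessThan intro!: sum.cong)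

lemma pow_mat_smult:
  assumes A: "(A::'a::comm_semiring_1 mat) \<in> carrier_mat n n"
  shows "(a \<cdot>\<^sub>m A) ^\<^sub>m k = a ^ k \<cdot>\<^sub>m A ^\<^sub>m k"
proof (induction k)
  case 0 then show ?case using A by auto
next
  case (Suc k)
  have C: "a ^ k \<cdot>\<^sub>m A ^\<^sub>m k \<in> carrier_mat n n" "a \<cdot>\<^sub>m A \<in> carrier_mat n n" using A by auto
  show ?case
    unfolding pow_mat.simps Suc using A
    by (intro eq_matI)
       (auto simp: index_mult_mat_sum[OF C] index_mult_mat_sum[OF pow_carrier_mat[OF A] A]
         sum_distrib_left mult.assoc intro!: sum.cong)
qed

lemma nonneg_mat_mult:
  assumes A: "A \<in> carrier_mat n n" and B: "B \<in> carrier_mat n n" and "nonneg_mat A" "nonneg_mat B"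
  shows "nonneg_mat (A * B)"
proof -
  have "(A * B) $$ (i,j) \<ge> 0" if "i < n" "j < n" for i j
    unfolding index_mult_mat_sum[OF A B that] using assms that unfolding nonneg_mat_def
    by (auto intro!: sum_nonneg)
  thus ?thesis using A B unfolding nonneg_mat_def by auto
qed

lemma nonneg_mat_pow:
  assumes "A \<in> carrier_mat n n" "nonneg_mat A"
  shows "nonneg_mat (A ^\<^sub>m k)"
proof (induction k)
  case 0 then show ?case unfolding nonneg_mat_def by auto
next
  case (Suc k) then show ?case
    using nonneg_mat_mult[OF pow_carrier_mat[OF assms(1)] assms(1) _ assms(2)] by simp
qed

text \<open>Vectors are modelled as functions \<open>nat \<Rightarrow> real\<close>, so that pointwise inequalities need no
  carrier bookkeeping.\<close>

definition mat_act :: "real mat \<Rightarrow> (nat \<Rightarrow> real) \<Rightarrow> nat \<Rightarrow> real" where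
  "mat_act A x p = (\<Sum>q<dim_col A. A $$ (p,q) * x q)"

lemma mat_act_mult:
  assumes A: "A \<in> carrier_mat n n" and B: "B \<in> carrier_mat n n" and p: "p < n"
  shows "mat_act (A * B) x p = mat_act A (mat_act B x) p"
proof -
  have "mat_act (A * B) x p = (\<Sum>q<n. (\<Sum>t<n. A $$ (p,t) * B $$ (t,q)) * x q)"
    unfolding mat_act_def using A B p
    by (auto simp: index_mult_mat_sum[OF A B] simp del: index_mult_mat(1) intro!: sum.cong)
  also have "\<dots> = (\<Sum>q<n. \<Sum>t<n. A $$ (p,t) * (B $$ (t,q) * x q))"
    by (simp add: sum_distrib_right mult.assoc)
  also have "\<dots> = (\<Sum>t<n. \<Sum>q<n. A $$ (p,t) * (B $$ (t,q) * x q))"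
    by (rule sum.swap)
  also have "\<dots> = mat_act A (mat_act B x) p"
    unfolding mat_act_def using A B by (simp add: sum_distrib_left)
  finally show ?thesis .
qed

lemma mat_act_one:
  assumes "p < n"
  shows "mat_act (1\<^sub>m n) x p = x p"
proof -
  have "mat_act (1\<^sub>m n) x p = (\<Sum>q<n. if p = q then x q else 0)"
    unfolding mat_act_def using assms by (intro sum.cong) auto
  also have "\<dots> = x p" using assms by simp
  finally show ?thesis .
qed

lemma mat_act_cong: "(\<And>q. q < dim_col A \<Longrightarrow> x q = y q) \<Longrightarrow> mat_act A x p = mat_act A y p"
  unfolding mat_act_def by (auto intro!: sum.cong)

lemma mat_act_add: "mat_act A (\<lambda>q. x q + y q) p = mat_act A x p + mat_act A y p"
  unfolding mat_act_def by (simp add: distrib_left sum.distrib)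

lemma mat_act_diff_scale: "mat_act A (\<lambda>q. x q - r * y q) p = mat_act A x p - r * mat_act A y p"
  unfolding mat_act_def
  by (simp add: right_diff_distrib sum_subtractf sum_distrib_left algebra_simps)

lemma mat_act_scale: "mat_act A (\<lambda>q. r * y q) p = r * mat_act A y p"
  unfolding mat_act_def by (simp add: sum_distrib_left algebra_simps)

lemma mat_act_nonneg:
  assumes "A \<in> carrier_mat n n" "nonneg_mat A" "\<forall>q<n. y q \<ge> 0" "p < n"
  shows "mat_act A y p \<ge> 0"
  using assms unfolding mat_act_def nonneg_mat_def by (auto intro!: sum_nonneg)

lemma mat_act_mono:
  assumes "A \<in> carrier_mat n n" "nonneg_mat A" "\<forall>q<n. y q \<le> z q" "p < n"
  shows "mat_act A y p \<le> mat_act A z p"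
  using assms unfolding mat_act_def nonneg_mat_def by (auto intro!: sum_mono mult_left_mono)

lemma rho_nonneg: "M \<in> carrier_mat n n \<Longrightarrow> 0 < n \<Longrightarrow> rho M \<ge> 0"
  unfolding rho_def using spectral_radius_mem_max(1)[of "map_mat complex_of_real M" n] by auto

lemma spectral_radius_smult_le:
  assumes M: "M \<in> carrier_mat n n" and n: "0 < n" and a: "0 < a"
  shows "spectral_radius (map_mat complex_of_real (a \<cdot>\<^sub>m M)) \<le> a * rho M"
proof -
  let ?A = "map_mat complex_of_real (a \<cdot>\<^sub>m M)"
  let ?B = "map_mat complex_of_real M"
  have A: "?A \<in> carrier_mat n n" and B: "?B \<in> carrier_mat n n" using M by auto
  from spectral_radius_mem_max(1)[OF A n] obtain mu where mu: "mu \<in> spectrum ?A"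
    and eq: "spectral_radius ?A = cmod mu" by auto
  from mu obtain v where "eigenvector ?A v mu" unfolding spectrum_def eigenvalue_def by auto
  hence v: "v \<in> carrier_vec n" "v \<noteq> 0\<^sub>v n" and Av: "?A *\<^sub>v v = mu \<cdot>\<^sub>v v"
    unfolding eigenvector_def using A by auto
  have "?B *\<^sub>v v = (mu / complex_of_real a) \<cdot>\<^sub>v v"
  proof (rule eq_vecI)
    fix i assume "i < dim_vec ((mu / complex_of_real a) \<cdot>\<^sub>v v)"
    hence i: "i < n" using v by auto
    have "(?A *\<^sub>v v) $ i = complex_of_real a * (?B *\<^sub>v v) $ i"
      using i v M
      by (auto simp: index_mult_mat_vec_sum[OF A v(1) i] index_mult_mat_vec_sum[OF B v(1) i]
          sum_distrib_left mult.assoc intro!: sum.cong)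
    with Av i v a show "(?B *\<^sub>v v) $ i = ((mu / complex_of_real a) \<cdot>\<^sub>v v) $ i"
      by (auto simp: field_simps)
  qed (use v M in auto)
  hence "eigenvector ?B v (mu / complex_of_real a)" unfolding eigenvector_def using v M by auto
  hence "cmod (mu / complex_of_real a) \<in> cmod ` spectrum ?B"
    unfolding spectrum_def eigenvalue_def by auto
  from spectral_radius_mem_max(2)[OF B n this]
  have "cmod mu / a \<le> rho M" unfolding rho_def using a by (simp add: norm_divide)
  thus ?thesis using eq a by (simp add: field_simps)
qed

lemma pow_mat_entries_bound:
  assumes M: "M \<in> carrier_mat n n" and n: "0 < n" and c: "rho M < c"
  obtains K where "\<And>k p q. p < n \<Longrightarrow> q < n \<Longrightarrow> \<bar>(M ^\<^sub>m k) $$ (p,q)\<bar> \<le> K * c ^ k"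
proof -
  have c0: "c > 0" using c rho_nonneg[OF M n] by auto
  let ?A = "map_mat complex_of_real ((1/c) \<cdot>\<^sub>m M)"
  have A: "?A \<in> carrier_mat n n" using M by auto
  have "spectral_radius ?A \<le> (1/c) * rho M"
    by (rule spectral_radius_smult_le[OF M n]) (use c0 in auto)
  also have "\<dots> < 1" using c c0 by (simp add: field_simps)
  finally obtain K where K: "\<And>k. norm_bound (?A ^\<^sub>m k) K"
    using spectral_radius_jnf_norm_bound_less_1_upper_triangular[OF A] by auto
  have "\<bar>(M ^\<^sub>m k) $$ (p,q)\<bar> \<le> K * c ^ k" if p: "p < n" and q: "q < n" for k p q
  proof -
    have "?A ^\<^sub>m k = map_mat complex_of_real (((1/c) \<cdot>\<^sub>m M) ^\<^sub>m k)"
      by (rule of_real_hom.mat_hom_pow[symmetric]) (use M in auto)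
    also have "\<dots> = map_mat complex_of_real ((1/c) ^ k \<cdot>\<^sub>m M ^\<^sub>m k)" by (simp add: pow_mat_smult[OF M])
    finally have "(?A ^\<^sub>m k) $$ (p,q) = complex_of_real ((1/c) ^ k * (M ^\<^sub>m k) $$ (p,q))"
      using p q M by simp
    moreover have "norm ((?A ^\<^sub>m k) $$ (p,q)) \<le> K"
      using K[of k] p q M unfolding norm_bound_def by auto
    ultimately have "(1/c) ^ k * \<bar>(M ^\<^sub>m k) $$ (p,q)\<bar> \<le> K"
      using c0 by (simp add: norm_mult norm_power norm_divide)
    thus ?thesis using c0 by (simp add: field_simps)
  qed
  thus thesis by (rule that)
qed

section \<open>Nonnegative subinvariant vectors of irreducible matrices\<close>

lemma irreducible_mat_positive_if_zeros_closed:
  assumes M: "M \<in> carrier_mat n n" and nn: "nonneg_mat M" and irr: "irreducible_mat M"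
    and x0: "\<forall>p<n. x p \<ge> 0" and p0: "p0 < n" "x p0 \<noteq> 0"
    and closed: "\<forall>p<n. x p = 0 \<longrightarrow> mat_act M x p = 0"
  shows "\<forall>p<n. x p > 0"
proof (rule ccontr)
  define I where "I = {p. p < n \<and> x p = 0}"
  assume "\<not> ?thesis"
  then obtain z where "z < n" "\<not> x z > 0" by blast
  with x0 have "z \<in> I" unfolding I_def by force
  hence "I \<noteq> {}" by blast
  moreover have "I \<subset> {0..<dim_row M}"
  proof -
    have "I \<subseteq> {0..<n}" "p0 \<notin> I" using p0 unfolding I_def by auto
    thus ?thesis using p0(1) M by auto
  qed
  moreover have "\<forall>i\<in>I. \<forall>j\<in>{0..<dim_row M} - I. M $$ (i,j) = 0"
  proof (intro ballI)
    fix i j assume i: "i \<in> I" and j: "j \<in> {0..<dim_row M} - I"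
    have jn: "j < n" and xj: "x j \<noteq> 0" using j M unfolding I_def by auto
    have "(\<Sum>q<n. M $$ (i,q) * x q) = 0" using closed i M unfolding I_def mat_act_def by auto
    moreover have "\<forall>q\<in>{..<n}. 0 \<le> M $$ (i,q) * x q"
      using nn x0 i M unfolding I_def nonneg_mat_def by auto
    ultimately have "\<forall>q\<in>{..<n}. M $$ (i,q) * x q = 0"
      using sum_nonneg_eq_0_iff[of "{..<n}" "\<lambda>q. M $$ (i,q) * x q"] by simp
    with jn xj show "M $$ (i,j) = 0" by auto
  qed
  ultimately have "\<exists>I. I \<noteq> {} \<and> I \<subset> {0..<dim_row M} \<and>
      (\<forall>i\<in>I. \<forall>j\<in>{0..<dim_row M} - I. M $$ (i,j) = 0)"
    by blast
  with irr show False unfolding irreducible_mat_def by blast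
qed

lemma decreasing_chain_eventually_empty:
  fixes Z :: "nat \<Rightarrow> 'a set"
  assumes fin: "finite (Z 0)" and sub: "\<And>k. Z (Suc k) \<subseteq> Z k"
    and strict: "\<And>k. Z k \<noteq> {} \<Longrightarrow> Z (Suc k) \<noteq> Z k" and k: "card (Z 0) \<le> k"
  shows "Z k = {}"
proof -
  have fin_Z: "finite (Z k)" for k
    using finite_subset[OF lift_Suc_antimono_le[of Z, OF sub, of 0 k] fin] by simp
  have "Z k = {} \<or> card (Z k) + k \<le> card (Z 0)" for k
  proof (induction k)
    case (Suc k)
    show ?case
    proof (cases "Z k = {}")
      case False
      with sub strict have "Z (Suc k) \<subset> Z k" by blast
      hence "card (Z (Suc k)) < card (Z k)" using fin_Z by (intro psubset_card_mono)
      with Suc False show ?thesis by auto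
    qed (use sub[of k] in auto)
  qed simp
  from this[of k] k have "Z k = {} \<or> card (Z k) = 0" by auto
  thus ?thesis using fin_Z[of k] by auto
qed

definition id_plus_act :: "real mat \<Rightarrow> (nat \<Rightarrow> real) \<Rightarrow> nat \<Rightarrow> real" where
  "id_plus_act A y p = y p + mat_act A y p"

lemma id_plus_act_ge:
  assumes "M \<in> carrier_mat n n" "nonneg_mat M" "\<forall>q<n. y q \<ge> 0" "p < n"
  shows "y p \<le> id_plus_act M y p"
  using mat_act_nonneg[OF assms] unfolding id_plus_act_def by simp

lemma id_plus_act_iter_nonneg:
  assumes M: "M \<in> carrier_mat n n" and nn: "nonneg_mat M" and y0: "\<forall>q<n. y q \<ge> 0"
  shows "\<forall>p<n. (id_plus_act M ^^ k) y p \<ge> 0"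
proof (induction k)
  case (Suc k)
  show ?case
  proof (intro allI impI)
    fix p assume p: "p < n"
    from Suc p have "0 \<le> (id_plus_act M ^^ k) y p" by blast
    also have "\<dots> \<le> (id_plus_act M ^^ Suc k) y p" using id_plus_act_ge[OF M nn Suc p] by simp
    finally show "0 \<le> (id_plus_act M ^^ Suc k) y p" .
  qed
qed (use y0 in simp)

lemma id_plus_act_iter_positive:
  assumes M: "M \<in> carrier_mat n n" and nn: "nonneg_mat M" and irr: "irreducible_mat M"
    and y0: "\<forall>p<n. y p \<ge> 0" and p0: "p0 < n" "y p0 \<noteq> 0"
  shows "\<forall>p<n. (id_plus_act M ^^ n) y p > 0"
proof -
  define Y where "Y k = (id_plus_act M ^^ k) y" for k
  have Y_Suc: "Y (Suc k) p = Y k p + mat_act M (Y k) p" for k p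
    unfolding Y_def id_plus_act_def by simp
  have Y_nonneg: "\<forall>p<n. Y k p \<ge> 0" for k
    unfolding Y_def by (rule id_plus_act_iter_nonneg[OF M nn y0])
  have Y_mono: "Y k p \<le> Y (Suc k) p" if "p < n" for k p
    using id_plus_act_ge[OF M nn Y_nonneg that] by (simp add: Y_def)
  have Y_p0: "Y k p0 \<noteq> 0" for k
  proof (induction k)
    case (Suc k)
    have "0 \<le> Y k p0" using Y_nonneg[of k] p0(1) by blast
    with Suc Y_mono[OF p0(1), of k] show ?case by linarith
  qed (use p0 in \<open>simp add: Y_def\<close>)
  define Z where "Z k = {p. p < n \<and> Y k p = 0}" for k
  have "Z n = {}"
  proof (rule decreasing_chain_eventually_empty)
    show "finite (Z 0)" unfolding Z_def by simp
    show "Z (Suc k) \<subseteq> Z k" for k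
    proof
      fix p assume "p \<in> Z (Suc k)"
      hence p: "p < n" "Y (Suc k) p = 0" unfolding Z_def by auto
      with Y_mono[OF p(1), of k] Y_nonneg[of k] have "Y k p = 0" by force
      with p show "p \<in> Z k" unfolding Z_def by simp
    qed
    have "Z 0 \<subseteq> {0..<n} - {p0}" using Y_p0[of 0] unfolding Z_def by auto
    from card_mono[OF _ this] p0(1) show "card (Z 0) \<le> n" by simp
    show "Z (Suc k) \<noteq> Z k" if "Z k \<noteq> {}" for k
    proof
      assume eq: "Z (Suc k) = Z k"
      have "mat_act M (Y k) p = 0" if "p < n" "Y k p = 0" for p
      proof -
        have "p \<in> Z (Suc k)" unfolding eq using that by (simp add: Z_def)
        with that show ?thesis by (simp add: Z_def Y_Suc)
      qed
      hence "\<forall>p<n. Y k p > 0"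
        using irreducible_mat_positive_if_zeros_closed[OF M nn irr Y_nonneg p0(1) Y_p0] by blast
      hence "Z k = {}" unfolding Z_def by auto
      with that show False ..
    qed
  qed
  thus ?thesis using Y_nonneg[of n] unfolding Z_def Y_def by (auto simp: order_le_less)
qed

lemma id_plus_act_iter_commute:
  assumes A: "A \<in> carrier_mat n n"
  shows "\<forall>p<n. (id_plus_act A ^^ k) (\<lambda>q. mat_act A x q - r * x q) p
      = mat_act A ((id_plus_act A ^^ k) x) p - r * (id_plus_act A ^^ k) x p"
proof (induction k)
  case (Suc k)
  define z where "z = (id_plus_act A ^^ k) x"
  define d where "d = (id_plus_act A ^^ k) (\<lambda>q. mat_act A x q - r * x q)"
  have dz: "\<forall>q<n. d q = mat_act A z q - r * z q" using Suc unfolding d_def z_def by auto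
  show ?case
  proof (intro allI impI)
    fix p assume p: "p < n"
    have "mat_act A d p = mat_act A (mat_act A z) p - r * mat_act A z p"
      using mat_act_cong[of A d "\<lambda>q. mat_act A z q - r * z q"] dz A
      by (simp add: mat_act_diff_scale)
    moreover have "mat_act A (id_plus_act A z) p = mat_act A z p + mat_act A (mat_act A z) p"
      unfolding id_plus_act_def by (rule mat_act_add)
    moreover have "(id_plus_act A ^^ Suc k) (\<lambda>q. mat_act A x q - r * x q) p = d p + mat_act A d p"
      by (simp add: d_def id_plus_act_def)
    ultimately show "(id_plus_act A ^^ Suc k) (\<lambda>q. mat_act A x q - r * x q) p
        = mat_act A ((id_plus_act A ^^ Suc k) x) p - r * (id_plus_act A ^^ Suc k) x p"
      using dz p by (simp add: z_def id_plus_act_def algebra_simps)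
  qed
qed simp

lemma mat_act_pow_ge:
  assumes M: "M \<in> carrier_mat n n" and nn: "nonneg_mat M" and q: "0 \<le> q"
    and Mx: "\<forall>p<n. q * x p \<le> mat_act M x p"
  shows "\<forall>p<n. q ^ k * x p \<le> mat_act (M ^\<^sub>m k) x p"
proof (induction k)
  case 0 then show ?case using M by (simp add: mat_act_one)
next
  case (Suc k)
  show ?case
  proof (intro allI impI)
    fix p assume p: "p < n"
    have "q ^ Suc k * x p \<le> q * mat_act (M ^\<^sub>m k) x p"
      using Suc p q by (simp add: mult.assoc mult_left_mono)
    also have "\<dots> = mat_act (M ^\<^sub>m k) (\<lambda>s. q * x s) p" by (simp add: mat_act_scale)
    also have "\<dots> \<le> mat_act (M ^\<^sub>m k) (mat_act M x) p"
      by (rule mat_act_mono[OF pow_carrier_mat[OF M] nonneg_mat_pow[OF M nn] _ p]) (use Mx in auto)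
    also have "\<dots> = mat_act (M ^\<^sub>m Suc k) x p"
      by (simp add: mat_act_mult[OF pow_carrier_mat[OF M] M p])
    finally show "q ^ Suc k * x p \<le> mat_act (M ^\<^sub>m Suc k) x p" .
  qed
qed

text \<open>If \<open>q > \<rho>(M)\<close>, pick \<open>\<rho>(M) < c < q\<close>: the entries of
  \<open>M\<^sup>k x\<close> grow like \<open>q\<^sup>k\<close>, whereas those of \<open>M\<^sup>k\<close> are \<open>O(c\<^sup>k)\<close>.\<close>

lemma collatz_wielandt_le_rho:
  assumes M: "M \<in> carrier_mat n n" and nn: "nonneg_mat M"
    and x: "\<forall>p<n. x p > 0" and p0: "p0 < n" and Mx: "\<forall>p<n. q * x p \<le> mat_act M x p"
  shows "q \<le> rho M"
proof (rule ccontr)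
  assume "\<not> q \<le> rho M"
  hence qr: "rho M < q" by simp
  have n: "0 < n" using p0 by simp
  have r0: "rho M \<ge> 0" by (rule rho_nonneg[OF M n])
  have powge: "\<forall>p<n. q ^ k * x p \<le> mat_act (M ^\<^sub>m k) x p" for k
    by (rule mat_act_pow_ge[OF M nn _ Mx]) (use qr r0 in simp)
  define c where "c = (rho M + q) / 2"
  have cr: "rho M < c" and cq: "c < q" and c0: "c > 0" using qr r0 unfolding c_def by auto
  obtain K where K: "\<And>k p s. p < n \<Longrightarrow> s < n \<Longrightarrow> \<bar>(M ^\<^sub>m k) $$ (p,s)\<bar> \<le> K * c ^ k"
    using pow_mat_entries_bound[OF M n cr] by blast
  define X where "X = Max (x ` {..<n})"
  have X: "x p \<le> X" if "p < n" for p unfolding X_def using that by auto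
  have "q ^ k * x p0 \<le> real n * (K * c ^ k * X)" for k
  proof -
    have "q ^ k * x p0 \<le> mat_act (M ^\<^sub>m k) x p0" using powge[of k] p0 by blast
    also have "\<dots> = (\<Sum>s<n. (M ^\<^sub>m k) $$ (p0,s) * x s)"
      using pow_carrier_mat[OF M, of k] M unfolding mat_act_def by simp
    also have "\<dots> \<le> (\<Sum>s<n. K * c ^ k * X)"
    proof (rule sum_mono)
      fix s assume "s \<in> {..<n}"
      hence s: "s < n" by simp
      have "(M ^\<^sub>m k) $$ (p0,s) * x s \<le> \<bar>(M ^\<^sub>m k) $$ (p0,s)\<bar> * x s"
        using x s by (intro mult_right_mono) auto
      also have "\<dots> \<le> K * c ^ k * X"
        using K[OF p0 s, of k] X[OF s] x s by (intro mult_mono) auto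
      finally show "(M ^\<^sub>m k) $$ (p0,s) * x s \<le> K * c ^ k * X" .
    qed
    finally show ?thesis by simp
  qed
  hence "q ^ k \<le> real n * K * X / x p0 * c ^ k" for k
    using x p0 by (simp add: field_simps)
  hence bound: "(q / c) ^ k \<le> real n * K * X / x p0" for k
    using c0 by (simp add: power_divide field_simps)
  have "1 < q / c" using cq c0 by simp
  from real_arch_pow[OF this] obtain k where "real n * K * X / x p0 < (q / c) ^ k" by blast
  with bound[of k] show False by simp
qed

text \<open>Otherwise \<open>(I + M)\<^sup>n\<close> turns \<open>x\<close> and the nonzero defect \<open>M x - \<rho>(M) x \<ge> 0\<close> into
  positive vectors \<open>x'\<close> and \<open>d' = M x' - \<rho>(M) x'\<close>, so that \<open>M x' \<ge> (\<rho>(M) + \<epsilon>) x'\<close> for some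
  \<open>\<epsilon> > 0\<close>, contradicting the Collatz--Wielandt bound.\<close>

lemma subinvariant_imp_eigenvector:
  assumes M: "M \<in> carrier_mat n n" and nn: "nonneg_mat M" and irr: "irreducible_mat M"
    and x0: "\<forall>p<n. x p \<ge> 0" and p0: "p0 < n" "x p0 \<noteq> 0"
    and sub: "\<forall>p<n. rho M * x p \<le> mat_act M x p"
  shows "\<forall>p<n. mat_act M x p = rho M * x p"
proof (rule ccontr)
  assume "\<not> ?thesis"
  then obtain p1 where p1: "p1 < n" "mat_act M x p1 \<noteq> rho M * x p1" by auto
  define d where "d q = mat_act M x q - rho M * x q" for q
  have d0: "\<forall>q<n. d q \<ge> 0" and dp1: "d p1 \<noteq> 0" using sub p1 unfolding d_def by auto
  define x' where "x' = (id_plus_act M ^^ n) x"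
  define d' where "d' = (id_plus_act M ^^ n) d"
  have x': "\<forall>p<n. x' p > 0" unfolding x'_def by (rule id_plus_act_iter_positive[OF M nn irr x0 p0])
  have d': "\<forall>p<n. d' p > 0" unfolding d'_def
    by (rule id_plus_act_iter_positive[OF M nn irr d0 p1(1) dp1])
  have d'_eq: "\<forall>p<n. d' p = mat_act M x' p - rho M * x' p"
    using id_plus_act_iter_commute[OF M, of n x "rho M"] unfolding d'_def x'_def d_def by simp
  define \<delta> where "\<delta> = Min (d' ` {..<n})"
  define X where "X = Max (x' ` {..<n})"
  have \<delta>_pos: "\<delta> > 0" unfolding \<delta>_def using p0 d' by (subst Min_gr_iff) auto
  have \<delta>_le: "\<delta> \<le> d' p" if "p < n" for p unfolding \<delta>_def using that by auto
  have X_pos: "X > 0" unfolding X_def using p0 x' by (subst Max_gr_iff) auto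
  have X_ge: "x' p \<le> X" if "p < n" for p unfolding X_def using that by auto
  have "\<forall>p<n. (rho M + \<delta> / X) * x' p \<le> mat_act M x' p"
  proof (intro allI impI)
    fix p assume p: "p < n"
    have "\<delta> / X * x' p \<le> \<delta> / X * X" using X_ge[OF p] X_pos \<delta>_pos by (intro mult_left_mono) auto
    also have "\<dots> \<le> d' p" using X_pos \<delta>_le[OF p] by simp
    finally show "(rho M + \<delta> / X) * x' p \<le> mat_act M x' p" using d'_eq p
      by (simp add: algebra_simps)
  qed
  from collatz_wielandt_le_rho[OF M nn x' p0(1) this] \<delta>_pos X_pos show False
    by (simp add: field_simps)
qed

lemma subinvariant_imp_positive:
  assumes M: "M \<in> carrier_mat n n" and nn: "nonneg_mat M" and irr: "irreducible_mat M"
    and x0: "\<forall>p<n. x p \<ge> 0" and p0: "p0 < n" "x p0 \<noteq> 0"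
    and sub: "\<forall>p<n. rho M * x p \<le> mat_act M x p"
  shows "\<forall>p<n. x p > 0"
  using subinvariant_imp_eigenvector[OF assms]
  by (intro irreducible_mat_positive_if_zeros_closed[OF M nn irr x0 p0]) simp

section \<open>Principal submatrices\<close>

lemma pos_less_card: "finite K \<Longrightarrow> p \<in> K \<Longrightarrow> pos K p < card K"
  unfolding pos_def by (intro psubset_card_mono) auto

lemma pos_pick: "t < card K \<Longrightarrow> pos K (pick K t) = t"
  unfolding pos_def using card_pick_le by auto

lemma pick_pos: "p \<in> K \<Longrightarrow> pick K (pos K p) = p"
  unfolding pos_def by (rule pick_card_in_set)

lemma sum_pick_reindex:
  assumes "finite K"
  shows "(\<Sum>t<card K. f (pick K t)) = (\<Sum>p\<in>K. f p)"
proof -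
  have "bij_betw (pick K) {..<card K} K"
    by (rule bij_betw_byWitness[where f' = "pos K"])
       (use assms pick_pos pos_pick pick_in_set_le pos_less_card in auto)
  thus ?thesis by (rule sum.reindex_bij_betw)
qed

lemma submatrix_carrier_subset:
  assumes M: "M \<in> carrier_mat n m" and I: "I \<subseteq> {0..<n}" and J: "J \<subseteq> {0..<m}"
  shows "submatrix M I J \<in> carrier_mat (card I) (card J)"
proof -
  have d: "dim_row M = n" "dim_col M = m" using M by auto
  have c: "{i. i < n \<and> i \<in> I} = I" "{j. j < m \<and> j \<in> J} = J" using I J by auto
  have "dim_row (submatrix M I J) = card I" "dim_col (submatrix M I J) = card J"
    by (simp_all only: dim_submatrix d c)
  thus ?thesis by auto
qed

lemma index_submatrix_subset:
  assumes M: "M \<in> carrier_mat n m" and I: "I \<subseteq> {0..<n}" and J: "J \<subseteq> {0..<m}"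
    and a: "a < card I" and b: "b < card J"
  shows "submatrix M I J $$ (a,b) = M $$ (pick I a, pick J b)"
proof -
  have "dim_row M = n" "dim_col M = m" using M by auto
  moreover have "{i. i < n \<and> i \<in> I} = I" "{j. j < m \<and> j \<in> J} = J" using I J by auto
  ultimately show ?thesis by (intro submatrix_index) (simp_all only: a b)
qed

lemma principal_submatrix_eigenvector_lift:
  assumes M: "M \<in> carrier_mat n n" and nn: "nonneg_mat M" and T: "T \<subseteq> {0..<n}"
    and y: "y \<in> carrier_vec (card T)"
    and ev: "map_mat complex_of_real (submatrix M T T) *\<^sub>v y = \<mu> \<cdot>\<^sub>v y"
  defines "x \<equiv> \<lambda>p. if p \<in> T then cmod (y $ pos T p) else 0"
  shows "\<forall>p<n. cmod \<mu> * x p \<le> mat_act M x p"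
proof (intro allI impI)
  fix p assume p: "p < n"
  have x0: "\<forall>q<n. x q \<ge> 0" unfolding x_def by simp
  show "cmod \<mu> * x p \<le> mat_act M x p"
  proof (cases "p \<in> T")
    case False
    then show ?thesis using mat_act_nonneg[OF M nn x0 p] by (simp add: x_def)
  next
    case True
    define B where "B = submatrix M T T"
    have finT: "finite T" using finite_subset[OF T] by simp
    have B: "B \<in> carrier_mat (card T) (card T)" unfolding B_def
      by (rule submatrix_carrier_subset[OF M T T])
    have a: "pos T p < card T" by (rule pos_less_card[OF finT True])
    have B_entry: "B $$ (pos T p, t) = M $$ (p, pick T t)" if "t < card T" for t
      unfolding B_def using index_submatrix_subset[OF M T T a that] pick_pos[OF True] by simp
    have B_nonneg: "B $$ (pos T p, t) \<ge> 0" if "t < card T" for t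
      using nn p M pick_in_set_le[OF that] T unfolding B_entry[OF that] nonneg_mat_def by auto
    have "cmod \<mu> * x p = cmod ((map_mat complex_of_real B *\<^sub>v y) $ pos T p)"
      using ev y a True by (simp add: B_def x_def norm_mult)
    also have "\<dots> = cmod (\<Sum>t<card T. complex_of_real (B $$ (pos T p, t)) * y $ t)"
      using index_mult_mat_vec_sum[of "map_mat complex_of_real B" "card T" "card T" y "pos T p"]
        B y a by simp
    also have "\<dots> \<le> (\<Sum>t<card T. B $$ (pos T p, t) * cmod (y $ t))"
      by (rule order_trans[OF norm_sum]) (use B_nonneg in \<open>simp add: norm_mult\<close>)
    also have "\<dots> = (\<Sum>t<card T. M $$ (p, pick T t) * x (pick T t))"
      using pos_pick pick_in_set_le by (auto simp: B_entry x_def intro!: sum.cong)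
    also have "\<dots> = (\<Sum>q\<in>T. M $$ (p, q) * x q)" by (rule sum_pick_reindex[OF finT])
    also have "\<dots> = mat_act M x p"
      unfolding mat_act_def using M T by (intro sum.mono_neutral_left) (auto simp: x_def)
    finally show ?thesis .
  qed
qed

lemma rho_principal_submatrix_less:
  assumes M: "M \<in> carrier_mat n n" and nn: "nonneg_mat M" and irr: "irreducible_mat M"
    and T: "T \<subseteq> {0..<n}" "T \<noteq> {}" and i0: "i0 < n" "i0 \<notin> T"
  shows "rho (submatrix M T T) < rho M"
proof (rule ccontr)
  assume "\<not> ?thesis"
  hence le: "rho M \<le> rho (submatrix M T T)" by simp
  let ?B = "map_mat complex_of_real (submatrix M T T)"
  have m: "card T > 0" using finite_subset[OF T(1)] T(2) by (simp add: card_gt_0_iff)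
  have B: "?B \<in> carrier_mat (card T) (card T)" using submatrix_carrier_subset[OF M T(1) T(1)]
    by simp
  from spectral_radius_mem_max(1)[OF B m] obtain \<mu> where "\<mu> \<in> spectrum ?B"
    and rho_B: "rho (submatrix M T T) = cmod \<mu>" unfolding rho_def by auto
  then obtain y where "eigenvector ?B y \<mu>" unfolding spectrum_def eigenvalue_def by auto
  hence y: "y \<in> carrier_vec (card T)" "y \<noteq> 0\<^sub>v (card T)" and ev: "?B *\<^sub>v y = \<mu> \<cdot>\<^sub>v y"
    unfolding eigenvector_def using B by auto
  define x where "x p = (if p \<in> T then cmod (y $ pos T p) else 0)" for p
  obtain t0 where t0: "t0 < card T" "y $ t0 \<noteq> 0"
  proof (rule ccontr)
    assume "\<not> thesis"
    hence "\<forall>t<card T. y $ t = 0" using that by blast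
    hence "y = 0\<^sub>v (card T)" using y(1) by (intro eq_vecI) auto
    thus False using y(2) by simp
  qed
  have t0_T: "pick T t0 \<in> T" by (rule pick_in_set_le[OF t0(1)])
  have x0: "\<forall>p<n. x p \<ge> 0" unfolding x_def by simp
  have x_t0: "x (pick T t0) \<noteq> 0" using t0_T t0(2) by (simp add: x_def pos_pick[OF t0(1)])
  have "\<forall>p<n. rho M * x p \<le> mat_act M x p"
  proof (intro allI impI)
    fix p assume p: "p < n"
    have "rho M * x p \<le> cmod \<mu> * x p" using le rho_B x0 p by (simp add: mult_right_mono)
    also have "\<dots> \<le> mat_act M x p"
      using principal_submatrix_eigenvector_lift[OF M nn T(1) y(1) ev] p unfolding x_def by blast
    finally show "rho M * x p \<le> mat_act M x p" .
  qed
  moreover have "pick T t0 < n" using t0_T T(1) by auto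
  ultimately have "x i0 > 0" using subinvariant_imp_positive[OF M nn irr x0 _ x_t0] i0(1) by blast
  thus False using i0(2) by (simp add: x_def)
qed

section \<open>Neumann series\<close>

lemma geom_mat_carrier: "C \<in> carrier_mat m m \<Longrightarrow> geom_mat C l \<in> carrier_mat m m"
  by (induction l) auto

lemma index_geom_mat:
  assumes C: "C \<in> carrier_mat m m" and a: "a < m" and b: "b < m"
  shows "geom_mat C l $$ (a,b) = (\<Sum>k<Suc l. (C ^\<^sub>m k) $$ (a,b))"
proof (induction l)
  case 0 then show ?case using C a b by simp
next
  case (Suc l)
  have "geom_mat C (Suc l) $$ (a,b) = geom_mat C l $$ (a,b) + (C ^\<^sub>m Suc l) $$ (a,b)"
  proof -
    have "dim_row (C ^\<^sub>m Suc l) = m" "dim_col (C ^\<^sub>m Suc l) = m"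
      using pow_carrier_mat[OF C, of "Suc l"] by auto
    thus ?thesis using a b by (simp del: pow_mat.simps)
  qed
  then show ?case using Suc by simp
qed

lemma mat_inv_eqI:
  assumes A: "(A::real mat) \<in> carrier_mat m m" and Q: "Q \<in> carrier_mat m m" and QA: "Q * A = 1\<^sub>m m"
  shows "mat_inv A = Q"
  unfolding mat_inv_def
proof (rule the_equality)
  have AQ: "A * Q = 1\<^sub>m m" by (rule mat_mult_left_right_inverse[OF Q A QA])
  show "inverts_mat A Q \<and> inverts_mat Q A" unfolding inverts_mat_def using A Q AQ QA by auto
next
  fix Q' assume "inverts_mat A Q' \<and> inverts_mat Q' A"
  hence AQ': "A * Q' = 1\<^sub>m m" and Q'A: "Q' * A = 1\<^sub>m (dim_row Q')" unfolding inverts_mat_def using A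
    by auto
  have Q': "Q' \<in> carrier_mat m m"
    using arg_cong[OF AQ', of dim_col] arg_cong[OF Q'A, of dim_col] A by auto
  have "Q' = Q' * (A * Q)" using mat_mult_left_right_inverse[OF Q A QA] Q' by simp
  also have "\<dots> = (Q' * A) * Q" using assoc_mult_mat[OF Q' A Q] by simp
  also have "\<dots> = Q" using Q'A Q' Q by simp
  finally show "Q' = Q" .
qed

lemma neumann_series_left_inverse:
  fixes C :: "real mat"
  assumes C: "C \<in> carrier_mat m m"
    and summ: "\<And>a b. a < m \<Longrightarrow> b < m \<Longrightarrow> summable (\<lambda>k. (C ^\<^sub>m k) $$ (a,b))"
  shows "mat m m (\<lambda>(a,b). \<Sum>k. (C ^\<^sub>m k) $$ (a,b)) * (1\<^sub>m m - C) = 1\<^sub>m m"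
    (is "?P * _ = _")
proof (rule eq_matI)
  fix a b assume "a < dim_row (1\<^sub>m m :: real mat)" "b < dim_col (1\<^sub>m m :: real mat)"
  hence a: "a < m" and b: "b < m" by auto
  let ?f = "\<lambda>a b k. (C ^\<^sub>m k) $$ (a,b)"
  have P: "?P \<in> carrier_mat m m" by simp
  have D: "1\<^sub>m m - C \<in> carrier_mat m m" by (rule minus_carrier_mat[OF C])
  have "(?P * (1\<^sub>m m - C)) $$ (a,b) = (\<Sum>t<m. ?P $$ (a,t) * ((if t = b then 1 else 0) - C $$ (t,b)))"
    using index_mult_mat_sum[OF P D a b] C b by (auto intro!: sum.cong)
  also have "\<dots> = (\<Sum>t<m. if t = b then ?P $$ (a,t) else 0) - (\<Sum>t<m. ?P $$ (a,t) * C $$ (t,b))"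
    unfolding sum_subtractf[symmetric] by (intro sum.cong) (auto simp: algebra_simps)
  also have "(\<Sum>t<m. if t = b then ?P $$ (a,t) else 0) = ?P $$ (a,b)" using b by simp
  also have "(\<Sum>t<m. ?P $$ (a,t) * C $$ (t,b)) = (\<Sum>t<m. \<Sum>k. ?f a t k * C $$ (t,b))"
    using a summ by (intro sum.cong) (auto simp: suminf_mult2)
  also have "\<dots> = (\<Sum>k. \<Sum>t<m. ?f a t k * C $$ (t,b))"
    by (rule suminf_sum[symmetric]) (use summ a in \<open>auto intro: summable_mult2\<close>)
  also have "\<dots> = (\<Sum>k. ?f a b (Suc k))"
    using index_mult_mat_sum[OF pow_carrier_mat[OF C] C a b] by simp
  also have "\<dots> = (\<Sum>k. ?f a b k) - ?f a b 0"
    by (rule suminf_split_head[OF summ[OF a b]])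
  finally show "(?P * (1\<^sub>m m - C)) $$ (a,b) = 1\<^sub>m m $$ (a,b)" using a b C by simp
qed (use C in auto)

lemma summable_pow_mat_entries:
  assumes C: "C \<in> carrier_mat m m" and rho: "rho C < 1" and a: "a < m" and b: "b < m"
  shows "summable (\<lambda>k. (C ^\<^sub>m k) $$ (a,b))"
proof -
  have m: "0 < m" using a by simp
  define c where "c = (rho C + 1) / 2"
  have c: "rho C < c" "c < 1" "0 < c" using rho rho_nonneg[OF C m] unfolding c_def by auto
  obtain K where K: "\<And>k a b. a < m \<Longrightarrow> b < m \<Longrightarrow> \<bar>(C ^\<^sub>m k) $$ (a,b)\<bar> \<le> K * c ^ k"
    using pow_mat_entries_bound[OF C m c(1)] by blast
  show ?thesis
  proof (rule summable_comparison_test)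
    show "\<exists>N. \<forall>k\<ge>N. norm ((C ^\<^sub>m k) $$ (a,b)) \<le> K * c ^ k" using K[OF a b] by auto
    show "summable (\<lambda>k. K * c ^ k)" using c by (intro summable_mult summable_geometric) auto
  qed
qed

lemma neumann_series:
  fixes B :: "real mat"
  assumes B: "B \<in> carrier_mat m m" and m: "0 < m" and r: "rho B < r"
  obtains P where "P \<in> carrier_mat m m"
    and "\<forall>a<m. \<forall>b<m. (\<lambda>l. geom_mat ((1/r) \<cdot>\<^sub>m B) l $$ (a,b)) \<longlonglongrightarrow> P $$ (a,b)"
    and "mat_inv (B - r \<cdot>\<^sub>m 1\<^sub>m m) = (- (1/r)) \<cdot>\<^sub>m P"
proof -
  have r0: "r > 0" using r rho_nonneg[OF B m] by auto
  define C where "C = (1/r) \<cdot>\<^sub>m B"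
  have C: "C \<in> carrier_mat m m" unfolding C_def using B by simp
  have "rho C \<le> (1/r) * rho B"
    unfolding rho_def C_def using spectral_radius_smult_le[OF B m, of "1/r"] r0
    by (simp add: rho_def)
  also have "\<dots> < 1" using r r0 by (simp add: field_simps)
  finally have summ: "summable (\<lambda>k. (C ^\<^sub>m k) $$ (a,b))" if "a < m" "b < m" for a b
    using summable_pow_mat_entries[OF C _ that] by blast
  define P where "P = mat m m (\<lambda>(a,b). \<Sum>k. (C ^\<^sub>m k) $$ (a,b))"
  have P: "P \<in> carrier_mat m m" unfolding P_def by simp
  have "(\<lambda>l. geom_mat C l $$ (a,b)) \<longlonglongrightarrow> P $$ (a,b)" if ab: "a < m" "b < m" for a b
    using LIMSEQ_Suc[OF summable_LIMSEQ[OF summ[OF ab]]] index_geom_mat[OF C ab] ab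
    by (simp add: P_def)
  moreover have "mat_inv (B - r \<cdot>\<^sub>m 1\<^sub>m m) = (- (1/r)) \<cdot>\<^sub>m P"
  proof (rule mat_inv_eqI)
    have "(- (1/r)) \<cdot>\<^sub>m P * (B - r \<cdot>\<^sub>m 1\<^sub>m m) = P * (1\<^sub>m m - C)"
    proof (rule eq_matI)
      fix a b assume "a < dim_row (P * (1\<^sub>m m - C))" "b < dim_col (P * (1\<^sub>m m - C))"
      hence a: "a < m" and b: "b < m" using P C by auto
      have L: "(- (1/r)) \<cdot>\<^sub>m P \<in> carrier_mat m m" "B - r \<cdot>\<^sub>m 1\<^sub>m m \<in> carrier_mat m m" using P B by auto
      have R: "1\<^sub>m m - C \<in> carrier_mat m m" by (rule minus_carrier_mat[OF C])
      show "((- (1/r)) \<cdot>\<^sub>m P * (B - r \<cdot>\<^sub>m 1\<^sub>m m)) $$ (a,b) = (P * (1\<^sub>m m - C)) $$ (a,b)"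
        unfolding index_mult_mat_sum[OF L a b] index_mult_mat_sum[OF P R a b]
        using a b B P r0 by (intro sum.cong) (auto simp: C_def field_simps)
    qed (use B P C in auto)
    thus "(- (1/r)) \<cdot>\<^sub>m P * (B - r \<cdot>\<^sub>m 1\<^sub>m m) = 1\<^sub>m m"
      using neumann_series_left_inverse[OF C summ] by (simp add: P_def)
  qed (use B P in auto)
  ultimately show thesis using that P unfolding C_def by blast
qed

section \<open>Masked products\<close>

definition restrict_mat :: "nat set \<Rightarrow> real mat \<Rightarrow> real mat" where
  "restrict_mat U A =
     mat (dim_row A) (dim_col A) (\<lambda>(p,q). if p \<in> U \<and> q \<in> U then A $$ (p,q) else 0)"

definition restrict_cols :: "nat set \<Rightarrow> real mat \<Rightarrow> real mat" where
  "restrict_cols U A = mat (dim_row A) (dim_col A) (\<lambda>(p,q). if q \<in> U then A $$ (p,q) else 0)"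

lemma restrict_mat_carrier: "A \<in> carrier_mat n n \<Longrightarrow> restrict_mat U A \<in> carrier_mat n n"
  unfolding restrict_mat_def by auto

lemma restrict_cols_carrier: "A \<in> carrier_mat n n \<Longrightarrow> restrict_cols U A \<in> carrier_mat n n"
  unfolding restrict_cols_def by auto

lemma submatrix_mult_restrict_cols:
  assumes A: "A \<in> carrier_mat n n" and B: "B \<in> carrier_mat n n"
    and I: "I \<subseteq> {0..<n}" and J: "J \<subseteq> {0..<n}" and K: "K \<subseteq> {0..<n}"
  shows "submatrix A I K * submatrix B K J = submatrix (restrict_cols K A * B) I J"
proof -
  define C where "C = restrict_cols K A * B"
  have C: "C \<in> carrier_mat n n" unfolding C_def
    by (rule mult_carrier_mat[OF restrict_cols_carrier[OF A] B])
  have AIK: "submatrix A I K \<in> carrier_mat (card I) (card K)"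
    by (rule submatrix_carrier_subset[OF A I K])
  have BKJ: "submatrix B K J \<in> carrier_mat (card K) (card J)"
    by (rule submatrix_carrier_subset[OF B K J])
  have CIJ: "submatrix C I J \<in> carrier_mat (card I) (card J)"
    by (rule submatrix_carrier_subset[OF C I J])
  have "(submatrix A I K * submatrix B K J) $$ (a,b) = submatrix C I J $$ (a,b)"
    if a: "a < card I" and b: "b < card J" for a b
  proof -
    have pa: "pick I a < n" and pb: "pick J b < n"
      using pick_in_set_le[OF a] pick_in_set_le[OF b] I J by auto
    have "(submatrix A I K * submatrix B K J) $$ (a,b)
        = (\<Sum>t<card K. A $$ (pick I a, pick K t) * B $$ (pick K t, pick J b))"
      unfolding index_mult_mat_sum[OF AIK BKJ a b]
      using index_submatrix_subset[OF A I K a] index_submatrix_subset[OF B K J _ b]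
      by (intro sum.cong) auto
    also have "\<dots> = (\<Sum>p\<in>K. A $$ (pick I a, p) * B $$ (p, pick J b))"
      by (rule sum_pick_reindex) (use finite_subset[OF K] in simp)
    also have "\<dots> = (\<Sum>p<n. (if p \<in> K then A $$ (pick I a, p) else 0) * B $$ (p, pick J b))"
      by (rule sum.mono_neutral_cong_left) (use K in auto)
    also have "\<dots> = C $$ (pick I a, pick J b)"
      unfolding C_def index_mult_mat_sum[OF restrict_cols_carrier[OF A] B pa pb]
      by (rule sum.cong) (use pa A in \<open>auto simp: restrict_cols_def\<close>)
    also have "\<dots> = submatrix C I J $$ (a,b)" using index_submatrix_subset[OF C I J a b] by simp
    finally show ?thesis .
  qed
  thus ?thesis unfolding C_def[symmetric] using AIK BKJ CIJ by (intro eq_matI) auto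
qed

lemma restrict_cols_mult_eq:
  assumes X: "X \<in> carrier_mat n n" and N: "N \<in> carrier_mat n n"
    and zero_rows: "\<forall>p<n. \<forall>q<n. p \<notin> U \<longrightarrow> N $$ (p,q) = 0"
  shows "restrict_cols U X * N = X * N"
proof (rule eq_matI)
  fix a b assume "a < dim_row (X * N)" "b < dim_col (X * N)"
  hence a: "a < n" and b: "b < n" using X N by auto
  show "(restrict_cols U X * N) $$ (a,b) = (X * N) $$ (a,b)"
    unfolding index_mult_mat_sum[OF restrict_cols_carrier[OF X] N a b]
      index_mult_mat_sum[OF X N a b]
    by (rule sum.cong) (use a X zero_rows b in \<open>auto simp: restrict_cols_def\<close>)
qed (use X N in \<open>auto simp: restrict_cols_def\<close>)

lemma submatrix_one:
  assumes U: "U \<subseteq> {0..<n}"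
  shows "submatrix (1\<^sub>m n :: real mat) U U = 1\<^sub>m (card U)"
proof -
  have O: "(1\<^sub>m n :: real mat) \<in> carrier_mat n n" by simp
  have "submatrix (1\<^sub>m n :: real mat) U U $$ (a,b) = (1\<^sub>m (card U) :: real mat) $$ (a,b)"
    if a: "a < card U" and b: "b < card U" for a b
  proof -
    have "pick U a < n" "pick U b < n" using pick_in_set_le[OF a] pick_in_set_le[OF b] U by auto
    moreover have "pick U a = pick U b \<longleftrightarrow> a = b" using pos_pick[OF a] pos_pick[OF b] by metis
    ultimately show ?thesis unfolding index_submatrix_subset[OF O U U a b] using a b by simp
  qed
  thus ?thesis using submatrix_carrier_subset[OF O U U] by (intro eq_matI) auto
qed

lemma submatrix_add:
  fixes A B :: "real mat"
  assumes A: "A \<in> carrier_mat n n" and B: "B \<in> carrier_mat n n"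
    and I: "I \<subseteq> {0..<n}" and J: "J \<subseteq> {0..<n}"
  shows "submatrix (A + B) I J = submatrix A I J + submatrix B I J"
proof -
  have AB: "A + B \<in> carrier_mat n n" using A B by simp
  have BIJ: "submatrix B I J \<in> carrier_mat (card I) (card J)"
    by (rule submatrix_carrier_subset[OF B I J])
  have "submatrix (A + B) I J $$ (a,b) = (submatrix A I J + submatrix B I J) $$ (a,b)"
    if a: "a < card I" and b: "b < card J" for a b
  proof -
    have "pick I a < n" "pick J b < n" using pick_in_set_le[OF a] pick_in_set_le[OF b] I J by auto
    thus ?thesis
      using index_submatrix_subset[OF AB I J a b] index_submatrix_subset[OF A I J a b]
        index_submatrix_subset[OF B I J a b] BIJ a b A B by simp
  qed
  thus ?thesis using BIJ submatrix_carrier_subset[OF AB I J] by (intro eq_matI) auto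
qed

lemma submatrix_pow:
  fixes N :: "real mat"
  assumes N: "N \<in> carrier_mat n n" and U: "U \<subseteq> {0..<n}"
    and zero_rows: "\<forall>p<n. \<forall>q<n. p \<notin> U \<longrightarrow> N $$ (p,q) = 0"
  shows "submatrix N U U ^\<^sub>m k = submatrix (N ^\<^sub>m k) U U"
proof (induction k)
  case 0
  have "dim_row (submatrix N U U) = card U" using submatrix_carrier_subset[OF N U U] by auto
  then show ?case using N submatrix_one[OF U] by simp
next
  case (Suc k)
  have Nk: "N ^\<^sub>m k \<in> carrier_mat n n" using N by simp
  have "submatrix N U U ^\<^sub>m Suc k = submatrix (N ^\<^sub>m k) U U * submatrix N U U" using Suc by simp
  also have "\<dots> = submatrix (restrict_cols U (N ^\<^sub>m k) * N) U U"
    by (rule submatrix_mult_restrict_cols[OF Nk N U U U])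
  also have "restrict_cols U (N ^\<^sub>m k) * N = N ^\<^sub>m Suc k"
    using restrict_cols_mult_eq[OF Nk N zero_rows] by simp
  finally show ?case .
qed

lemma submatrix_geom_mat:
  fixes N :: "real mat"
  assumes N: "N \<in> carrier_mat n n" and U: "U \<subseteq> {0..<n}"
    and zero_rows: "\<forall>p<n. \<forall>q<n. p \<notin> U \<longrightarrow> N $$ (p,q) = 0"
  shows "geom_mat (submatrix N U U) l = submatrix (geom_mat N l) U U"
proof (induction l)
  case 0
  have "dim_row (submatrix N U U) = card U" using submatrix_carrier_subset[OF N U U] by auto
  then show ?case using N submatrix_one[OF U] by simp
next
  case (Suc l)
  have "geom_mat N l \<in> carrier_mat n n" "N ^\<^sub>m Suc l \<in> carrier_mat n n"
    using geom_mat_carrier[OF N] N by auto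
  then show ?case
    unfolding geom_mat.simps Suc submatrix_pow[OF N U zero_rows]
    by (simp add: submatrix_add[OF _ _ U U])
qed

lemma smult_submatrix_restrict_mat:
  assumes M: "M \<in> carrier_mat n n" and U: "U \<subseteq> {0..<n}"
  shows "c \<cdot>\<^sub>m submatrix M U U = submatrix (c \<cdot>\<^sub>m restrict_mat U M) U U"
proof -
  have N: "c \<cdot>\<^sub>m restrict_mat U M \<in> carrier_mat n n" using restrict_mat_carrier[OF M] by simp
  have MUU: "submatrix M U U \<in> carrier_mat (card U) (card U)"
    by (rule submatrix_carrier_subset[OF M U U])
  have "(c \<cdot>\<^sub>m submatrix M U U) $$ (a,b) = submatrix (c \<cdot>\<^sub>m restrict_mat U M) U U $$ (a,b)"
    if a: "a < card U" and b: "b < card U" for a b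
  proof -
    have "pick U a \<in> U" "pick U b \<in> U" using pick_in_set_le[OF a] pick_in_set_le[OF b] by auto
    moreover have "pick U a < n" "pick U b < n" using calculation U by auto
    ultimately show ?thesis
      using index_submatrix_subset[OF N U U a b] index_submatrix_subset[OF M U U a b] MUU a b M
      unfolding restrict_mat_def by simp
  qed
  thus ?thesis using MUU submatrix_carrier_subset[OF N U U] by (intro eq_matI) auto
qed

text \<open>Zeroing the rows and columns outside \<open>U\<close>, instead of extracting the blocks
  \<open>M\<^sub>S\<^sub>U\<close>, \<open>M\<^sub>U\<^sub>U\<close>, \<open>M\<^sub>U\<^sub>S\<close>, makes this matrix entrywise monotone in \<open>U\<close>.\<close>

definition masked_neumann_mat :: "nat set \<Rightarrow> nat \<Rightarrow> real mat \<Rightarrow> real mat" where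
  "masked_neumann_mat U l M =
     restrict_cols U (restrict_cols U M * geom_mat ((1 / rho M) \<cdot>\<^sub>m restrict_mat U M) l) * M"

lemma isoradial_l_eq_masked_neumann_mat:
  assumes M: "M \<in> carrier_mat n n" and i: "i < n" and j: "j < n"
  shows "isoradial_l l i j M = submatrix M {i,j} {i,j} +
     (1 / rho M) \<cdot>\<^sub>m submatrix (masked_neumann_mat (Gamma M l i j - {i,j}) l M) {i,j} {i,j}"
proof -
  define U where "U = Gamma M l i j - {i,j}"
  define c where "c = 1 / rho M"
  define N where "N = c \<cdot>\<^sub>m restrict_mat U M"
  define G where "G = geom_mat N l"
  have U: "U \<subseteq> {0..<n}" unfolding U_def Gamma_def using M by auto
  have S: "{i,j} \<subseteq> {0..<n}" using i j by auto
  have N: "N \<in> carrier_mat n n" unfolding N_def using restrict_mat_carrier[OF M] by simp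
  have G: "G \<in> carrier_mat n n" unfolding G_def by (rule geom_mat_carrier[OF N])
  have MG: "restrict_cols U M * G \<in> carrier_mat n n"
    by (rule mult_carrier_mat[OF restrict_cols_carrier[OF M] G])
  have zero_rows: "\<forall>p<n. \<forall>q<n. p \<notin> U \<longrightarrow> N $$ (p,q) = 0"
    unfolding N_def restrict_mat_def using M by auto
  have "isoradial_l l i j M = submatrix M {i,j} {i,j} +
     c \<cdot>\<^sub>m (submatrix M {i,j} U * geom_mat (c \<cdot>\<^sub>m submatrix M U U) l * submatrix M U {i,j})"
    unfolding isoradial_l_def Let_def U_def c_def ..
  also have "geom_mat (c \<cdot>\<^sub>m submatrix M U U) l = submatrix G U U"
    unfolding smult_submatrix_restrict_mat[OF M U] G_def N_def[symmetric]
    by (rule submatrix_geom_mat[OF N U zero_rows])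
  also have "submatrix M {i,j} U * submatrix G U U = submatrix (restrict_cols U M * G) {i,j} U"
    by (rule submatrix_mult_restrict_cols[OF M G S U U])
  also have "submatrix (restrict_cols U M * G) {i,j} U * submatrix M U {i,j}
      = submatrix (restrict_cols U (restrict_cols U M * G) * M) {i,j} {i,j}"
    by (rule submatrix_mult_restrict_cols[OF MG M S S U])
  finally show ?thesis unfolding G_def N_def c_def U_def masked_neumann_mat_def .
qed

definition nonneg_le_mat :: "nat \<Rightarrow> real mat \<Rightarrow> real mat \<Rightarrow> bool" where
  "nonneg_le_mat n A B \<longleftrightarrow> A \<in> carrier_mat n n \<and> B \<in> carrier_mat n n \<and>
     (\<forall>p<n. \<forall>q<n. 0 \<le> A $$ (p,q) \<and> A $$ (p,q) \<le> B $$ (p,q))"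

lemma nonneg_le_mat_trans:
  "nonneg_le_mat n A B \<Longrightarrow> nonneg_le_mat n B C \<Longrightarrow> nonneg_le_mat n A C"
  unfolding nonneg_le_mat_def by (meson order_trans)

lemma nonneg_le_mat_refl: "A \<in> carrier_mat n n \<Longrightarrow> nonneg_mat A \<Longrightarrow> nonneg_le_mat n A A"
  unfolding nonneg_le_mat_def nonneg_mat_def by auto

lemma nonneg_le_mat_one: "nonneg_le_mat n (1\<^sub>m n) (1\<^sub>m n)"
  unfolding nonneg_le_mat_def by auto

lemma nonneg_le_mat_add:
  "nonneg_le_mat n A A' \<Longrightarrow> nonneg_le_mat n B B' \<Longrightarrow> nonneg_le_mat n (A + B) (A' + B')"
  unfolding nonneg_le_mat_def by (auto intro!: add_mono add_nonneg_nonneg)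

lemma nonneg_le_mat_add_right:
  "nonneg_le_mat n A A \<Longrightarrow> nonneg_le_mat n B B \<Longrightarrow> nonneg_le_mat n A (A + B)"
  unfolding nonneg_le_mat_def by auto

lemma nonneg_le_mat_smult:
  "0 \<le> c \<Longrightarrow> nonneg_le_mat n A A' \<Longrightarrow> nonneg_le_mat n (c \<cdot>\<^sub>m A) (c \<cdot>\<^sub>m A')"
  unfolding nonneg_le_mat_def by (fastforce intro: mult_left_mono)

lemma nonneg_le_mat_mult:
  assumes AA': "nonneg_le_mat n A A'" and BB': "nonneg_le_mat n B B'"
  shows "nonneg_le_mat n (A * B) (A' * B')"
proof -
  have A: "A \<in> carrier_mat n n" "A' \<in> carrier_mat n n"
    and B: "B \<in> carrier_mat n n" "B' \<in> carrier_mat n n"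
    using assms unfolding nonneg_le_mat_def by auto
  have le: "0 \<le> X $$ (p,q)" "X $$ (p,q) \<le> X' $$ (p,q)" "0 \<le> X' $$ (p,q)"
    if "nonneg_le_mat n X X'" "p < n" "q < n" for X X' p q
    using that unfolding nonneg_le_mat_def by force+
  have "0 \<le> (A * B) $$ (p,q) \<and> (A * B) $$ (p,q) \<le> (A' * B') $$ (p,q)" if "p < n" "q < n" for p q
    unfolding index_mult_mat_sum[OF A(1) B(1) that] index_mult_mat_sum[OF A(2) B(2) that]
    using le[OF AA'] le[OF BB'] that by (auto intro!: sum_nonneg sum_mono mult_mono)
  thus ?thesis using A B unfolding nonneg_le_mat_def by auto
qed

lemma nonneg_le_mat_pow: "nonneg_le_mat n A A' \<Longrightarrow> nonneg_le_mat n (A ^\<^sub>m k) (A' ^\<^sub>m k)"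
proof (induction k)
  case 0 then show ?case using nonneg_le_mat_one unfolding nonneg_le_mat_def by auto
next
  case (Suc k) then show ?case using nonneg_le_mat_mult by simp
qed

lemma nonneg_le_mat_geom: "nonneg_le_mat n A A' \<Longrightarrow> nonneg_le_mat n (geom_mat A l) (geom_mat A' l)"
proof (induction l)
  case 0 then show ?case using nonneg_le_mat_one unfolding nonneg_le_mat_def by auto
next
  case (Suc l) then show ?case unfolding geom_mat.simps using nonneg_le_mat_add nonneg_le_mat_pow
    by blast
qed

lemma nonneg_le_mat_geom_mono:
  assumes A: "nonneg_le_mat n A A" and k: "k \<le> k'"
  shows "nonneg_le_mat n (geom_mat A k) (geom_mat A k')"
  using k
proof (induction k' rule: dec_induct)
  case base show ?case by (rule nonneg_le_mat_geom[OF A])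
next
  case (step k')
  have "nonneg_le_mat n (geom_mat A k') (geom_mat A (Suc k'))"
    unfolding geom_mat.simps
    by (intro nonneg_le_mat_add_right nonneg_le_mat_geom nonneg_le_mat_pow A)
  with step.IH show ?case by (rule nonneg_le_mat_trans)
qed

lemma nonneg_le_mat_restrict_mat:
  "M \<in> carrier_mat n n \<Longrightarrow> nonneg_mat M \<Longrightarrow> U \<subseteq> U' \<Longrightarrow>
    nonneg_le_mat n (restrict_mat U M) (restrict_mat U' M)"
  unfolding nonneg_le_mat_def restrict_mat_def nonneg_mat_def by auto

lemma nonneg_le_mat_restrict_cols:
  assumes "nonneg_le_mat n A A'" "U \<subseteq> U'"
  shows "nonneg_le_mat n (restrict_cols U A) (restrict_cols U' A')"
proof -
  have "0 \<le> A' $$ (p,q)" if "p < n" "q < n" for p q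
    using assms(1) that unfolding nonneg_le_mat_def by (meson order_trans)
  thus ?thesis using assms unfolding nonneg_le_mat_def restrict_cols_def by auto
qed

lemma nonneg_le_masked_neumann_mat:
  assumes M: "M \<in> carrier_mat n n" and nn: "nonneg_mat M" and n: "0 < n"
    and U: "U \<subseteq> U'" and k: "k \<le> k'"
  shows "nonneg_le_mat n (masked_neumann_mat U k M) (masked_neumann_mat U' k' M)"
proof -
  have c: "0 \<le> 1 / rho M" using rho_nonneg[OF M n] by simp
  have "nonneg_le_mat n (geom_mat ((1 / rho M) \<cdot>\<^sub>m restrict_mat U M) k)
      (geom_mat ((1 / rho M) \<cdot>\<^sub>m restrict_mat U' M) k')"
    by (rule nonneg_le_mat_trans[OF nonneg_le_mat_geom nonneg_le_mat_geom_mono[OF _ k]])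
       (intro nonneg_le_mat_smult[OF c] nonneg_le_mat_restrict_mat[OF M nn] U order_refl)+
  thus ?thesis unfolding masked_neumann_mat_def
    by (intro nonneg_le_mat_mult nonneg_le_mat_restrict_cols nonneg_le_mat_refl[OF M nn] U)
qed

section \<open>Limit and monotonicity of the approximation\<close>

lemma tendsto_mult_mat_middle:
  fixes X Y P :: "real mat"
  assumes X: "X \<in> carrier_mat p m" and Y: "Y \<in> carrier_mat m q" and G: "\<And>l. G l \<in> carrier_mat m m"
    and P: "P \<in> carrier_mat m m" and conv: "\<forall>s<m. \<forall>t<m. (\<lambda>l. G l $$ (s,t)) \<longlonglongrightarrow> P $$ (s,t)"
    and a: "a < p" and b: "b < q"
  shows "(\<lambda>l. (X * G l * Y) $$ (a,b)) \<longlonglongrightarrow> (X * P * Y) $$ (a,b)"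
proof -
  have e: "(X * H * Y) $$ (a,b) = (\<Sum>t<m. (\<Sum>s<m. X $$ (a,s) * H $$ (s,t)) * Y $$ (t,b))"
    if H: "H \<in> carrier_mat m m" for H
  proof -
    have XH: "X * H \<in> carrier_mat p m" using X H by auto
    show ?thesis unfolding index_mult_mat_sum[OF XH Y a b]
      by (rule sum.cong) (use index_mult_mat_sum[OF X H a] in auto)
  qed
  show ?thesis unfolding e[OF G] e[OF P]
    by (intro tendsto_intros) (use conv in auto)
qed

text \<open>No connectivity is needed here: \<open>dist_G\<close> is a natural number even for unreachable pairs
  (the \<open>LEAST\<close> of an empty set), so all distances are bounded by their sum.\<close>

lemma Gamma_eventually_full:
  assumes M: "M \<in> carrier_mat n n" and i: "i < n" and j: "j < n"
  shows "\<forall>\<^sub>F l in sequentially. Gamma M l i j = {0..<n}"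
proof (rule eventually_sequentiallyI)
  define D where "D = (\<Sum>p<n. \<Sum>q<n. dist_G M p q)"
  have dist_le: "dist_G M p q \<le> D" if "p < n" "q < n" for p q
  proof -
    have "dist_G M p q \<le> (\<Sum>q'<n. dist_G M p q')" by (rule member_le_sum) (use that in auto)
    also have "\<dots> \<le> D" unfolding D_def by (rule member_le_sum) (use that in auto)
    finally show ?thesis .
  qed
  fix l assume l: "2 * D \<le> l"
  have "dist_G M p k + dist_G M k q \<le> l" if "p < n" "q < n" "k < n" for p q k
    using dist_le[OF that(1,3)] dist_le[OF that(3,2)] l by linarith
  thus "Gamma M l i j = {0..<n}" unfolding Gamma_def using M i j by auto
qed

lemma isoradial_l_eventually_eq:
  assumes M: "M \<in> carrier_mat n n" and i: "i < n" and j: "j < n"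
  defines "T \<equiv> {0..<n} - {i,j}"
  shows "\<forall>\<^sub>F l in sequentially. isoradial_l l i j M = submatrix M {i,j} {i,j} + (1 / rho M) \<cdot>\<^sub>m
    (submatrix M {i,j} T * geom_mat ((1 / rho M) \<cdot>\<^sub>m submatrix M T T) l * submatrix M T {i,j})"
  using Gamma_eventually_full[OF M i j]
  by eventually_elim (simp add: isoradial_l_def Let_def T_def)

lemma isoradial_l_tendsto:
  assumes M: "M \<in> carrier_mat n n" and nn: "nonneg_mat M" and irr: "irreducible_mat M"
    and n3: "n \<ge> 3" and i: "i < n" and j: "j < n" and ij: "i \<noteq> j" and a: "a < 2" and b: "b < 2"
  shows "(\<lambda>l. isoradial_l l i j M $$ (a,b)) \<longlonglongrightarrow> isoradial {i,j} M $$ (a,b)"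
proof -
  define S where "S = {i,j}"
  define T where "T = {0..<n} - S"
  define r where "r = rho M"
  have S: "S \<subseteq> {0..<n}" and cS: "card S = 2" unfolding S_def using i j ij by auto
  have T: "T \<subseteq> {0..<n}" and iT: "i \<notin> T" unfolding T_def S_def by auto
  have cT: "card T = n - 2" unfolding T_def using card_Diff_subset[OF finite_subset[OF S] S] cS
    by simp
  hence m: "card T > 0" and Tne: "T \<noteq> {}" using n3 by auto
  define B where "B = submatrix M T T"
  define X where "X = submatrix M S T"
  define Y where "Y = submatrix M T S"
  define Z where "Z = submatrix M S S"
  have B: "B \<in> carrier_mat (card T) (card T)" unfolding B_def
    by (rule submatrix_carrier_subset[OF M T T])
  have X: "X \<in> carrier_mat 2 (card T)" unfolding X_def using submatrix_carrier_subset[OF M S T] cS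
    by simp
  have Y: "Y \<in> carrier_mat (card T) 2" unfolding Y_def using submatrix_carrier_subset[OF M T S] cS
    by simp
  have rB: "rho B < r" unfolding B_def r_def
    by (rule rho_principal_submatrix_less[OF M nn irr T Tne i iT])
  obtain P where P: "P \<in> carrier_mat (card T) (card T)"
    and conv: "\<forall>s<card T. \<forall>t<card T. (\<lambda>l. geom_mat ((1/r) \<cdot>\<^sub>m B) l $$ (s,t)) \<longlonglongrightarrow> P $$ (s,t)"
    and inv: "mat_inv (B - r \<cdot>\<^sub>m 1\<^sub>m (card T)) = (- (1/r)) \<cdot>\<^sub>m P"
    by (rule neumann_series[OF B m rB])
  define G where "G l = geom_mat ((1/r) \<cdot>\<^sub>m B) l" for l
  have G: "G l \<in> carrier_mat (card T) (card T)" for l unfolding G_def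
    by (rule geom_mat_carrier) (use B in auto)
  have "isoradial {i,j} M = Z - X * mat_inv (B - r \<cdot>\<^sub>m 1\<^sub>m (card T)) * Y"
    using M unfolding isoradial_def Let_def X_def Y_def Z_def B_def r_def T_def S_def by simp
  also have "\<dots> = Z - X * ((- (1/r)) \<cdot>\<^sub>m P) * Y" unfolding inv ..
  also have "X * ((- (1/r)) \<cdot>\<^sub>m P) * Y = (- (1/r)) \<cdot>\<^sub>m (X * P * Y)"
    using mult_smult_distrib[OF X P] mult_smult_assoc_mat[of "X * P" 2 "card T" Y 2] X P Y by auto
  finally have lim_eq: "isoradial {i,j} M $$ (a,b) = Z $$ (a,b) + (1/r) * (X * P * Y) $$ (a,b)"
    using X P Y a b by simp
  have "\<forall>\<^sub>F l in sequentially. isoradial_l l i j M = Z + (1/r) \<cdot>\<^sub>m (X * G l * Y)"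
    using isoradial_l_eventually_eq[OF M i j]
    unfolding X_def Y_def Z_def G_def B_def r_def T_def S_def .
  hence ev: "\<forall>\<^sub>F l in sequentially.
      Z $$ (a,b) + (1/r) * (X * G l * Y) $$ (a,b) = isoradial_l l i j M $$ (a,b)"
    by eventually_elim (use X G Y a b in simp)
  have lim: "(\<lambda>l. Z $$ (a,b) + (1/r) * (X * G l * Y) $$ (a,b)) \<longlonglongrightarrow> isoradial {i,j} M $$ (a,b)"
    unfolding lim_eq using conv
    by (intro tendsto_intros tendsto_mult_mat_middle[OF X Y G P _ a b]) (simp add: G_def)
  show ?thesis by (rule Lim_transform_eventually[OF lim ev])
qed

lemma isoradial_l_mono:
  assumes M: "M \<in> carrier_mat n n" and nn: "nonneg_mat M"
    and i: "i < n" and j: "j < n" and ij: "i \<noteq> j" and a: "a < 2" and b: "b < 2"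
  shows "isoradial_l l i j M $$ (a,b) \<le> isoradial_l (Suc l) i j M $$ (a,b)"
proof -
  define S where "S = {i,j}"
  have S: "S \<subseteq> {0..<n}" and cS: "card S = 2" unfolding S_def using i j ij by auto
  have a': "a < card S" and b': "b < card S" using a b cS by auto
  have pa: "pick S a < n" and pb: "pick S b < n" using pick_in_set_le[OF a'] pick_in_set_le[OF b'] S
    by auto
  have isoradial_l_entry: "isoradial_l k i j M $$ (a,b) = M $$ (pick S a, pick S b)
      + 1 / rho M * masked_neumann_mat (Gamma M k i j - S) k M $$ (pick S a, pick S b)" for k
  proof -
    have W: "masked_neumann_mat (Gamma M k i j - S) k M \<in> carrier_mat n n"
      unfolding masked_neumann_mat_def using M
      by (auto intro!: geom_mat_carrier simp: restrict_cols_def restrict_mat_def)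
    show ?thesis
      using isoradial_l_eq_masked_neumann_mat[OF M i j, of k] submatrix_carrier_subset[OF W S S]
        index_submatrix_subset[OF W S S a' b'] index_submatrix_subset[OF M S S a' b'] a b cS
      unfolding S_def by simp
  qed
  have "Gamma M l i j - S \<subseteq> Gamma M (Suc l) i j - S" unfolding Gamma_def by auto
  from nonneg_le_masked_neumann_mat[OF M nn _ this le_SucI[OF order_refl]] i pa pb
  have "masked_neumann_mat (Gamma M l i j - S) l M $$ (pick S a, pick S b)
      \<le> masked_neumann_mat (Gamma M (Suc l) i j - S) (Suc l) M $$ (pick S a, pick S b)"
    unfolding nonneg_le_mat_def by auto
  with rho_nonneg[OF M] i show ?thesis unfolding isoradial_l_entry by (simp add: divide_right_mono)
qed

lemma pos_pair_less:
  assumes "a \<in> {i,j}" "b \<in> {i,j}"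
  shows "pos {i,j} a < 2" "pos {i,j} b < 2"
proof -
  have "card {i,j} \<le> 2" by (simp add: card_insert_le_m1)
  thus "pos {i,j} a < 2" "pos {i,j} b < 2" using pos_less_card[of "{i,j}"] assms by fastforce+
qed

lemma index_eff_l:
  assumes "M \<in> carrier_mat n n" "i < n" "j < n"
  shows "eff_l l M $$ (i,j) = (if i \<noteq> j then entry (isoradial_l l i j M) {i,j} i j
     else (\<Sum>k\<in>{0..<n} - {i}. entry (isoradial_l l i k M) {i,k} i i))"
  using assms unfolding eff_l_def by simp

lemma index_eff:
  assumes "M \<in> carrier_mat n n" "i < n" "j < n"
  shows "eff M $$ (i,j) = (if i \<noteq> j then entry (isoradial {i,j} M) {i,j} i j
     else (\<Sum>k\<in>{0..<n} - {i}. entry (isoradial {i,k} M) {i,k} i i))"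
  using assms unfolding eff_def by simp

theorem theorem2:
  fixes M :: "real mat" and n :: nat
  assumes "n \<ge> 3" and "M \<in> carrier_mat n n"
    and "nonneg_mat M" and "irreducible_mat M"
  shows "(\<forall>i<n. \<forall>j<n. (\<lambda>l. eff_l l M $$ (i,j)) \<longlonglongrightarrow> eff M $$ (i,j))
       \<and> (\<forall>l\<ge>1. \<forall>i<n. \<forall>j<n. eff_l l M $$ (i,j) \<le> eff_l (Suc l) M $$ (i,j))"
proof -
  note M = assms(2)
  have lim: "(\<lambda>l. entry (isoradial_l l i j M) {i,j} a b) \<longlonglongrightarrow> entry (isoradial {i,j} M) {i,j} a b"
    if "i < n" "j < n" "i \<noteq> j" "a \<in> {i,j}" "b \<in> {i,j}" for i j a b
    unfolding entry_def using pos_pair_less[OF that(4,5)]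
    by (rule isoradial_l_tendsto[OF M assms(3,4,1) that(1-3)])
  have mono: "entry (isoradial_l l i j M) {i,j} a b \<le> entry (isoradial_l (Suc l) i j M) {i,j} a b"
    if "i < n" "j < n" "i \<noteq> j" "a \<in> {i,j}" "b \<in> {i,j}" for l i j a b
    unfolding entry_def using pos_pair_less[OF that(4,5)]
    by (rule isoradial_l_mono[OF M assms(3) that(1-3)])
  show ?thesis
  proof (intro conjI allI impI)
    fix i j assume ij: "i < n" "j < n"
    show "(\<lambda>l. eff_l l M $$ (i,j)) \<longlonglongrightarrow> eff M $$ (i,j)"
      unfolding index_eff_l[OF M ij] index_eff[OF M ij] using ij by (auto intro!: tendsto_sum lim)
  next
    fix l i j :: nat assume ij: "i < n" "j < n"
    show "eff_l l M $$ (i,j) \<le> eff_l (Suc l) M $$ (i,j)"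
      unfolding index_eff_l[OF M ij] using ij by (auto intro!: sum_mono mono)
  qed
qed
end
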